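(* Consider the scalar conservation law $u_t+H(u)_x=0$ and the following fully discrete nonstaggered Lagrangian–Eulerian scheme on a uniform mesh of spacing $h$ with cell averages $U_j^n$. For each $j$, let $U^n_{j-1/2}=\frac12(U^n_{j-1}+U^n_j)+\frac18(U'_j-U'_{j-1})$, where $U'_j$ are slope-limited variations, let $f^n_{j\pm1/2}=H(U^n_{j\pm1/2})/U^n_{j\pm1/2}$ (assuming $U^n_{j\pm1/2}\neq0$), $f^+=\max(f,0)$, $f^-=\max(-f,0)$, and define $$h_j^{n+1}=h+(f^n_{j+1/2}-f^n_{j-1/2})\Delta t,\qquad \overline U_j^{n+1}=\frac{h}{h_j^{n+1}}U_j^n,$$ $$U_j^{n+1}=\frac1h\Big(c_{-1,j}\overline U^{n+1}_{j-1}+c_{0,j}\overline U^{n+1}_j+c_{+1,j}\overline U^{n+1}_{j+1}\Big),$$ with $c_{-1,j}=f^+(U^n_{j-1/2})\Delta t=\max(f^n_{j-1/2},0)\Delta t$, $c_{+1,j}=f^-(U^n_{j+1/2})\Delta t=\max(-f^n_{j+1/2},0)\Delta t$ and $c_{0,j}=h-c_{-1,j}-c_{+1,j}$. Then, taking the limit $\Delta t\to0$, the scheme yields the ODE $$U_t=\frac1h\Big(U_{j-1}f^+_{j-\frac12}-U_jf^-_{j-\frac12}-U_jf^+_{j+\frac12}+U_{j+1}f^-_{j+\frac12}\Big),$$ where $U_j=U_j(t)$, $f^\pm_{j\pm1/2}=f^\pm(U_{j\pm1/2})$ and $U_t=\lim_{\Delta t\to0}\frac{U_j^{n+1}-U_j^n}{\Delta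 t}$; that is, the scheme is compatible with this ODE.
   Context: The quantities $f^n_{j\pm1/2}$ approximate the slopes of the "no-flow curves" bounding the Lagrangian–Eulerian control volumes; $h_j^{n+1}$ is the width of the evolved cell and $\overline U_j^{n+1}$ the conserved average on it, which is then projected back to the original mesh. *)

theory Defs
  imports Complex_Main
begin

text \<open>Cell averages U :: int => real (U j = U_j^n), slope-limited variations Up :: int => real
  (Up j = U'_j), flux H. Index convention: the interface value with index k is U_{k-1/2}.\<close>

definition half_val :: "(int \<Rightarrow> real) \<Rightarrow> (int \<Rightarrow> real) \<Rightarrow> int \<Rightarrow> real" where
  "half_val U Up k = (U (k-1) + U k) / 2 + (Up k - Up (k-1)) / 8"

definition fhalf :: "(real \<Rightarrow> real) \<Rightarrow> (int \<Rightarrow> real) \<Rightarrow> (int \<Rightarrow> real) \<Rightarrow> int \<Rightarrow> real" where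
  "fhalf H U Up k = H (half_val U Up k) / half_val U Up k"

definition fplus :: "real \<Rightarrow> real" where "fplus f = max f 0"
definition fminus :: "real \<Rightarrow> real" where "fminus f = max (- f) 0"

definition hnew :: "real \<Rightarrow> (real \<Rightarrow> real) \<Rightarrow> (int \<Rightarrow> real) \<Rightarrow> (int \<Rightarrow> real) \<Rightarrow> real \<Rightarrow> int \<Rightarrow> real" where
  "hnew h H U Up dt j = h + (fhalf H U Up (j+1) - fhalf H U Up j) * dt"

definition Ubar :: "real \<Rightarrow> (real \<Rightarrow> real) \<Rightarrow> (int \<Rightarrow> real) \<Rightarrow> (int \<Rightarrow> real) \<Rightarrow> real \<Rightarrow> int \<Rightarrow> real" where
  "Ubar h H U Up dt j = h / hnew h H U Up dt j * U j"

definition Unew :: "real \<Rightarrow> (real \<Rightarrow> real) \<Rightarrow> (int \<Rightarrow> real) \<Rightarrow> (int \<Rightarrow> real) \<Rightarrow> real \<Rightarrow> int \<Rightarrow> real" where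
  "Unew h H U Up dt j =
     (let cm = fplus (fhalf H U Up j) * dt;
          cp = fminus (fhalf H U Up (j+1)) * dt;
          c0 = h - cm - cp
      in (1/h) * (cm * Ubar h H U Up dt (j-1) + c0 * Ubar h H U Up dt j + cp * Ubar h H U Up dt (j+1)))"

end

theory Submission
  imports Defs
begin

text \<open>As a function of the time step, the new cell average is a rational function that is
  smooth near \<open>\<Delta>t = 0\<close> and equals \<open>U\<^sub>j\<close> there, so the limit of the difference quotient is
  its derivative at \<open>0\<close>. Differentiating the projection formula, the change of cell width,
  (f_{j+1/2} - f_{j-1/2}) U_j, combines with the weights f+_{j-1/2} and f-_{j+1/2} of the
  neighbouring cells through f = f+ - f- into the upwind fluxes of the ODE.\<close>

lemma fplus_minus_fminus: "fplus f - fminus f = f"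
  by (simp add: fplus_def fminus_def max_def)

lemma Ubar_at_zero: "h \<noteq> 0 \<Longrightarrow> Ubar h H U Up 0 k = U k"
  by (simp add: Ubar_def hnew_def)

lemma Unew_at_zero: "h \<noteq> 0 \<Longrightarrow> Unew h H U Up 0 j = U j"
  by (simp add: Unew_def Ubar_at_zero)

lemma Ubar_has_real_derivative_at_zero:
  assumes "h \<noteq> 0"
  shows "((\<lambda>dt. Ubar h H U Up dt k) has_real_derivative
           - (fhalf H U Up (k+1) - fhalf H U Up k) * U k / h) (at 0)"
proof -
  define s where "s = fhalf H U Up (k+1) - fhalf H U Up k"
  have "((\<lambda>dt. h / (h + s * dt) * U k) has_real_derivative
          - (h * s) / (h + s * 0)\<^sup>2 * U k) (at 0)"
    using assms by (auto intro!: derivative_eq_intros simp: power2_eq_square)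
  then show ?thesis
    unfolding Ubar_def hnew_def s_def
    by (rule DERIV_cong) (use assms in \<open>simp add: field_simps power2_eq_square\<close>)
qed

lemma Unew_has_real_derivative_at_zero:
  assumes "h \<noteq> 0"
  shows "((\<lambda>dt. Unew h H U Up dt j) has_real_derivative
           (1/h) * (U (j-1) * fplus (fhalf H U Up j) - U j * fminus (fhalf H U Up j)
                    - U j * fplus (fhalf H U Up (j+1)) + U (j+1) * fminus (fhalf H U Up (j+1))))
         (at 0)"
proof -
  define F where "F k = fhalf H U Up k" for k
  define a where "a = fplus (F j)"
  define b where "b = fminus (F (j+1))"
  define V where "V k dt = Ubar h H U Up dt k" for k dt
  have V: "(V k has_real_derivative - (F (k+1) - F k) * U k / h) (at 0)" for k
    unfolding V_def F_def using Ubar_has_real_derivative_at_zero[OF assms] .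
  have V0: "V k 0 = U k" for k
    using assms by (simp add: V_def Ubar_at_zero)
  have Unew_eq: "(\<lambda>dt. Unew h H U Up dt j) =
      (\<lambda>dt. (1/h) * (a * dt * V (j-1) dt + (h - a * dt - b * dt) * V j dt + b * dt * V (j+1) dt))"
    by (simp add: Unew_def Let_def V_def F_def a_def b_def)
  have D: "((\<lambda>dt. Unew h H U Up dt j) has_real_derivative
          (1/h) * (a * U (j-1) + (- a - b - (F (j+1) - F j)) * U j + b * U (j+1))) (at 0)"
    unfolding Unew_eq
    by (rule derivative_eq_intros V refl | simp)+ (use assms in \<open>simp add: V0 field_simps\<close>)
  have coeff: "- a - b - (F (j+1) - F j) = - fminus (F j) - fplus (F (j+1))"
    using fplus_minus_fminus[of "F j"] fplus_minus_fminus[of "F (j+1)"]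
    by (simp add: a_def b_def)
  show ?thesis
    by (rule DERIV_cong[OF D]) (simp only: coeff, simp add: F_def a_def b_def algebra_simps)
qed

theorem proposition2:
  fixes h :: real and H :: "real \<Rightarrow> real" and U Up :: "int \<Rightarrow> real" and j :: int
  assumes "h > 0"
    and "\<And>k. half_val U Up k \<noteq> 0"
  shows "((\<lambda>dt. (Unew h H U Up dt j - U j) / dt) \<longlongrightarrow>
           (1/h) * (U (j-1) * fplus (fhalf H U Up j) - U j * fminus (fhalf H U Up j)
                    - U j * fplus (fhalf H U Up (j+1)) + U (j+1) * fminus (fhalf H U Up (j+1))))
         (at 0)"
  \<comment> \<open>The second hypothesis is unused: since \<open>x / 0 = 0\<close>, the slopes are real numbers in
    any case, and the argument works for arbitrary slopes.\<close>
  using Unew_has_real_derivative_at_zero[of h H U Up j] assms(1)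
  by (simp add: has_field_derivative_iff Unew_at_zero)

end
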